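(* Let $P$ be a property that is a necessary condition for the existence of a perfect factor, i.e. for every $(G',f')\in\mathcal C$ such that $G'$ has a perfect $f'$-factor we have $P(G',f')$. Let $\kappa$ be an infinite cardinal and $(G,f)\in\mathcal C$ with $|V(G)|=\kappa^+$. If $G$ possesses a perfect $f$-factor, then $(G,f)$ is not $P$-destructed.
   Context: A graph is $G=(V,E)$ with $V$ a nonempty set and $E\subseteq\{e\subseteq V:|e|=2\}$. For $F\subseteq E$ and $x\in V$, $d_F(x)$ is the cardinal $|\{e\in F:x\in e\}|$. For $f:V\to$ Cardinals, an $f$-factor of $G$ is $F\subseteq E$ with $d_F(x)\le f(x)$ for all $x$; it is perfect if $d_F(x)=f(x)$ for all $x$; $f^{-1}(\lambda)=\{x\in V:f(x)=\lambda\}$. $\mathcal C$ is the class of all pairs $(G,f)$ with $G=(V,E)$ a graph, $f:V\to$ Cardinals, and $f(x)\le d_E(x)$ for all $x\in V$. A property $P$ is a class of pairs; $P(G,f)$ (also "$(G,f)$ fulfills $P$") means that $(G,f)\in\mathcal C$ and $(G,f)$ has property $P$. Destructions: let $(G,f)\in\mathcal C$, $G=(V,E)$, $|V|=\kappa^+$ for an infinite cardinal $\kappa$. Let $(A_\alpha)_{\alpha<\kappa^+}$ be an increasing continuous sequence (i.e. $A_\lambda=\bigcup_{\alpha<\lambda}A_\alpha$ for limit $\lambda$) of subsets of $V$ with $|A_\alpha|<\kappa^+$ for all $\alpha$ and $V=\bigcup_{\alpha<\kappa^+}A_\alpha$. For $\alpha<\kappa^+$ put $V_\alpha=(V\setminus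 A_\alpha)\cup f^{-1}(\kappa^+)$, $E_\alpha=\{\{x,y\}\in E: x\in V_\alpha,\ y\in V\setminus A_\alpha\}$, $G_\alpha=(V_\alpha,E_\alpha)$, $f_\alpha=f\restriction V_\alpha$. For a property $P$, $(A_\alpha)_{\alpha<\kappa^+}$ is a $P$-destruction of $(G,f)$ if $S=\{\alpha<\kappa^+: P(G_\alpha,f_\alpha)\text{ fails}\}$ is stationary in $\kappa^+$; $(G,f)$ is $P$-destructed if some such sequence is a $P$-destruction of $(G,f)$. *)

theory Defs
  imports Main
begin

definition is_graph :: "'a set \<Rightarrow> 'a set set \<Rightarrow> bool" where
  "is_graph V E \<longleftrightarrow> V \<noteq> {} \<and> E \<subseteq> {e. \<exists>x y. x \<in> V \<and> y \<in> V \<and> x \<noteq> y \<and> e = {x, y}}"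

(* d_F(x) is the cardinal |{e in F. x in e}| ; cardinal values f(x) are represented by sets f x,
   compared via card_of *)
definition inC :: "'a set \<Rightarrow> 'a set set \<Rightarrow> ('a \<Rightarrow> 'b set) \<Rightarrow> bool" where
  "inC V E f \<longleftrightarrow> is_graph V E \<and> (\<forall>x\<in>V. (card_of (f x), card_of {e\<in>E. x \<in> e}) \<in> ordLeq)"

definition perfect_factor :: "'a set \<Rightarrow> 'a set set \<Rightarrow> ('a \<Rightarrow> 'b set) \<Rightarrow> 'a set set \<Rightarrow> bool" where
  "perfect_factor V E f F \<longleftrightarrow> F \<subseteq> E \<and> (\<forall>x\<in>V. (card_of {e\<in>F. x \<in> e}, card_of (f x)) \<in> ordIso)"

definition fulfills :: "('a set \<Rightarrow> 'a set set \<Rightarrow> ('a \<Rightarrow> 'b set) \<Rightarrow> bool)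
    \<Rightarrow> 'a set \<Rightarrow> 'a set set \<Rightarrow> ('a \<Rightarrow> 'b set) \<Rightarrow> bool" where
  "fulfills P V E f \<longleftrightarrow> inC V E f \<and> P V E f"

(* ordinals below kappa^+ are the elements of Field R for the well-order R = cardSuc (card_of K) *)
definition lessR :: "'c rel \<Rightarrow> 'c \<Rightarrow> 'c \<Rightarrow> bool" where
  "lessR R a b \<longleftrightarrow> (a, b) \<in> R \<and> a \<noteq> b"

definition is_limit :: "'c rel \<Rightarrow> 'c \<Rightarrow> bool" where
  "is_limit R a \<longleftrightarrow> a \<in> Field R \<and> (\<exists>b. lessR R b a)
     \<and> (\<forall>b. lessR R b a \<longrightarrow> (\<exists>c. lessR R b c \<and> lessR R c a))"

definition club :: "'c rel \<Rightarrow> 'c set \<Rightarrow> bool" where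
  "club R C \<longleftrightarrow> C \<subseteq> Field R
     \<and> (\<forall>a\<in>Field R. \<exists>c\<in>C. lessR R a c)
     \<and> (\<forall>a. is_limit R a \<and> (\<forall>b. lessR R b a \<longrightarrow> (\<exists>c\<in>C. lessR R b c \<and> lessR R c a))
            \<longrightarrow> a \<in> C)"

definition stationary :: "'c rel \<Rightarrow> 'c set \<Rightarrow> bool" where
  "stationary R S \<longleftrightarrow> S \<subseteq> Field R \<and> (\<forall>C. club R C \<longrightarrow> S \<inter> C \<noteq> {})"

definition destr_seq :: "'k set \<Rightarrow> 'a set \<Rightarrow> ('k set \<Rightarrow> 'a set) \<Rightarrow> bool" where
  "destr_seq K V A \<longleftrightarrow>
     (\<forall>a\<in>Field (cardSuc (card_of K)). (card_of (A a), cardSuc (card_of K)) \<in> ordLess)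
   \<and> (\<forall>a b. (a, b) \<in> cardSuc (card_of K) \<longrightarrow> A a \<subseteq> A b)
   \<and> (\<forall>a. is_limit (cardSuc (card_of K)) a \<longrightarrow> A a = \<Union>{A b |b. lessR (cardSuc (card_of K)) b a})
   \<and> V = \<Union>{A a |a. a \<in> Field (cardSuc (card_of K))}"

definition V_at :: "'k set \<Rightarrow> 'a set \<Rightarrow> ('a \<Rightarrow> 'b set) \<Rightarrow> 'a set \<Rightarrow> 'a set" where
  "V_at K V f Aa = (V - Aa) \<union> {x\<in>V. (card_of (f x), cardSuc (card_of K)) \<in> ordIso}"

definition E_at :: "'k set \<Rightarrow> 'a set \<Rightarrow> 'a set set \<Rightarrow> ('a \<Rightarrow> 'b set) \<Rightarrow> 'a set \<Rightarrow> 'a set set" where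
  "E_at K V E f Aa = {e\<in>E. \<exists>x y. e = {x, y} \<and> x \<in> V_at K V f Aa \<and> y \<in> V - Aa}"

definition f_at :: "'k set \<Rightarrow> 'a set \<Rightarrow> ('a \<Rightarrow> 'b set) \<Rightarrow> 'a set \<Rightarrow> 'a \<Rightarrow> 'b set" where
  "f_at K V f Aa = (\<lambda>x. if x \<in> V_at K V f Aa then f x else {})"

definition is_P_destruction ::
  "('a set \<Rightarrow> 'a set set \<Rightarrow> ('a \<Rightarrow> 'b set) \<Rightarrow> bool) \<Rightarrow> 'k set
     \<Rightarrow> 'a set \<Rightarrow> 'a set set \<Rightarrow> ('a \<Rightarrow> 'b set) \<Rightarrow> ('k set \<Rightarrow> 'a set) \<Rightarrow> bool" where
  "is_P_destruction P K V E f A \<longleftrightarrow> destr_seq K V A \<and>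
     stationary (cardSuc (card_of K))
       {a \<in> Field (cardSuc (card_of K)).
          \<not> fulfills P (V_at K V f (A a)) (E_at K V E f (A a)) (f_at K V f (A a))}"

definition P_destructed ::
  "('a set \<Rightarrow> 'a set set \<Rightarrow> ('a \<Rightarrow> 'b set) \<Rightarrow> bool) \<Rightarrow> 'k set
     \<Rightarrow> 'a set \<Rightarrow> 'a set set \<Rightarrow> ('a \<Rightarrow> 'b set) \<Rightarrow> bool" where
  "P_destructed P K V E f \<longleftrightarrow> (\<exists>A. is_P_destruction P K V E f A)"

end

theory Submission
  imports Defs
begin

(* Fix a perfect f-factor F and call B closed if every y in B with f(y) < kappa^+ has all its
   F-neighbours in B. If B is closed and |B| < kappa^+, then F restricted to E_B is a perfect
   f_B-factor of G_B: a vertex outside B keeps all of its F-edges, and a vertex in B with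
   f = kappa^+ loses fewer than kappa^+ of its kappa^+ many F-edges. Vertices with f < kappa^+
   have fewer than kappa^+ neighbours, so, kappa^+ being regular and uncountable, the indices
   alpha with A_alpha closed form a club. It meets the stationary set of failures of P,
   which is impossible since P holds wherever a perfect factor exists. *)

unbundle cardinal_syntax

lemma lessR_trans:
  assumes "Card_order r" "lessR r a b" "lessR r b c"
  shows "lessR r a c"
  using assms Card_order_trans unfolding lessR_def by metis

lemma lessR_linear:
  assumes "Card_order r" "a \<in> Field r" "b \<in> Field r"
  shows "lessR r a b \<or> (b, a) \<in> r"
  using assms wo_rel.TOTALS[OF Card_order_wo_rel] wo_rel.REFL[OF Card_order_wo_rel]
  unfolding lessR_def refl_on_def by blast

lemma increasing_sequence_limit_sup:
  assumes r: "Card_order r" "regularCard r" "|UNIV :: nat set| <o r"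
    and s: "range s \<subseteq> Field r" "\<And>n. lessR r (s n) (s (Suc n))"
  obtains c where "is_limit r c" "\<And>n. lessR r (s n) c"
    "\<And>b. lessR r b c \<Longrightarrow> \<exists>n. lessR r b (s n)"
proof -
  have wo: "wo_rel r" using r(1) by (rule Card_order_wo_rel)
  have "\<not> cofinal (range s) r"
  proof
    assume "cofinal (range s) r"
    hence "|range s| =o r" using r(2) s(1) unfolding regularCard_def by blast
    moreover have "|range s| <o r"
      using card_of_image[of s UNIV] r(3) ordLeq_ordLess_trans by blast
    ultimately show False using not_ordLess_ordIso by blast
  qed
  then obtain u where u: "u \<in> Field r" "\<And>n. \<not> lessR r u (s n)"
    unfolding cofinal_def lessR_def by blast
  define U where "U = {c \<in> Field r. \<forall>n. (s n, c) \<in> r}"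
  have U: "U \<subseteq> Field r" "u \<in> U"
    using u s(1) lessR_linear[OF r(1)] unfolding U_def by blast+
  define c where "c = wo_rel.minim r U"
  have c: "c \<in> U" "\<And>x. x \<in> U \<Longrightarrow> (c, x) \<in> r"
    unfolding c_def using wo_rel.minim_in[OF wo U(1)] wo_rel.minim_least[OF wo U(1)] U(2) by blast+
  have above: "lessR r (s n) c" for n
  proof -
    have "(s (Suc n), c) \<in> r" using c(1) unfolding U_def by blast
    thus ?thesis using s(2)[of n] lessR_trans[OF r(1)] unfolding lessR_def by (cases "s (Suc n) = c") metis+
  qed
  have below: "\<exists>n. lessR r b (s n)" if b: "lessR r b c" for b
  proof -
    have bF: "b \<in> Field r" using b unfolding lessR_def by (blast intro: FieldI1)
    have "b \<notin> U" using c(2) b wo_rel.ANTISYM[OF wo] unfolding lessR_def antisym_def by blast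
    then obtain n where "(s n, b) \<notin> r" using bF unfolding U_def by blast
    thus ?thesis using lessR_linear[OF r(1) bF] s(1) by blast
  qed
  have "is_limit r c"
    unfolding is_limit_def using c(1) above below lessR_trans[OF r(1)] U_def by blast
  with above below show thesis using that by blast
qed

locale filtration =
  fixes r :: "'c rel" and A :: "'c \<Rightarrow> 'a set" and V :: "'a set"
  assumes Cinfinite: "Cinfinite r" and regular: "regularCard r"
    and uncountable: "|UNIV :: nat set| <o r"
    and chain: "relChain r A"
    and continuous: "\<And>c. is_limit r c \<Longrightarrow> A c = \<Union>{A b |b. lessR r b c}"
    and small: "\<And>a. a \<in> Field r \<Longrightarrow> |A a| <o r"
    and union: "V = (\<Union>a\<in>Field r. A a)"
begin

lemma Card_order_r: "Card_order r"
  using Cinfinite by (simp add: cinfinite_def)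

lemma mono: "lessR r a b \<Longrightarrow> A a \<subseteq> A b"
  using chain unfolding relChain_def lessR_def by blast

lemma subset_union: "a \<in> Field r \<Longrightarrow> A a \<subseteq> V"
  unfolding union by blast

lemma small_subset_above:
  assumes X: "X \<subseteq> V" "|X| <o r" and a: "a \<in> Field r"
  obtains b where "b \<in> Field r" "lessR r a b" "X \<subseteq> A b"
proof -
  obtain i where i: "i \<in> Field r" "X \<subseteq> A i"
    using regularCard_UNION[OF Card_order_r regular chain] X unfolding union by blast
  obtain b where b: "b \<in> Field r" "lessR r a b" "lessR r i b"
    using Cinfinite_limit2[OF a i(1) Cinfinite] unfolding lessR_def by blast
  have "X \<subseteq> A b" using i(2) mono[OF b(3)] by blast
  with b show thesis using that by blast
qed

context
  fixes N :: "'a \<Rightarrow> 'a set"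
  assumes N_subset: "\<And>y. y \<in> V \<Longrightarrow> N y \<subseteq> V"
    and N_small: "\<And>y. y \<in> V \<Longrightarrow> |N y| <o r"
begin

lemma closure_points_unbounded:
  assumes a: "a \<in> Field r"
  obtains c where "c \<in> Field r" "lessR r a c" "\<Union>(N ` A c) \<subseteq> A c"
proof -
  have ex_step: "\<forall>b\<in>Field r. \<exists>b'. b' \<in> Field r \<and> lessR r b b' \<and> \<Union>(N ` A b) \<subseteq> A b'"
  proof
    fix b assume b: "b \<in> Field r"
    have "\<Union>(N ` A b) \<subseteq> V" using N_subset subset_union[OF b] by blast
    moreover have "|\<Union>(N ` A b)| <o r"
      using card_of_UNION_ordLess_infinite_Field_regularCard[OF regular Cinfinite small[OF b]]
        N_small subset_union[OF b] by blast
    ultimately obtain b' where "b' \<in> Field r" "lessR r b b'" "\<Union>(N ` A b) \<subseteq> A b'"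
      using small_subset_above b by blast
    thus "\<exists>b'. b' \<in> Field r \<and> lessR r b b' \<and> \<Union>(N ` A b) \<subseteq> A b'" by blast
  qed
  obtain g where g: "\<And>b. b \<in> Field r \<Longrightarrow> g b \<in> Field r \<and> lessR r b (g b) \<and> \<Union>(N ` A b) \<subseteq> A (g b)"
    using bchoice[OF ex_step] by blast
  define s where "s n = (g ^^ n) a" for n
  have sF: "s n \<in> Field r" for n
    by (induction n) (use a g in \<open>auto simp: s_def\<close>)
  have step: "lessR r (s n) (s (Suc n)) \<and> \<Union>(N ` A (s n)) \<subseteq> A (s (Suc n))" for n
    using g[OF sF[of n]] by (simp add: s_def)
  have "range s \<subseteq> Field r" using sF by blast
  then obtain c where c: "is_limit r c" "\<And>n. lessR r (s n) c" "\<And>b. lessR r b c \<Longrightarrow> \<exists>n. lessR r b (s n)"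
    using increasing_sequence_limit_sup[OF Card_order_r regular uncountable] step by blast
  have "\<Union>(N ` A c) \<subseteq> A c"
  proof
    fix z assume "z \<in> \<Union>(N ` A c)"
    then obtain y b where y: "z \<in> N y" "y \<in> A b" "lessR r b c"
      using continuous[OF c(1)] by blast
    then obtain n where "lessR r b (s n)" using c(3) by blast
    hence "y \<in> A (s n)" using mono y(2) by blast
    hence "z \<in> A (s (Suc n))" using step y(1) by blast
    thus "z \<in> A c" using mono[OF c(2)] ..
  qed
  moreover have "c \<in> Field r" using c(1) unfolding is_limit_def by blast
  ultimately show thesis using that c(2)[of 0] by (simp add: s_def)
qed

lemma closure_points_closed:
  assumes a: "is_limit r a"
    and below: "\<And>b. lessR r b a \<Longrightarrow> \<exists>c. \<Union>(N ` A c) \<subseteq> A c \<and> lessR r b c \<and> lessR r c a"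
  shows "\<Union>(N ` A a) \<subseteq> A a"
proof
  fix z assume "z \<in> \<Union>(N ` A a)"
  then obtain y b where y: "z \<in> N y" "y \<in> A b" "lessR r b a"
    using continuous[OF a] by blast
  then obtain c where c: "\<Union>(N ` A c) \<subseteq> A c" "lessR r b c" "lessR r c a"
    using below by blast
  have "y \<in> A c" using mono[OF c(2)] y(2) ..
  hence "z \<in> A c" using c(1) y(1) by blast
  thus "z \<in> A a" using mono[OF c(3)] ..
qed

lemma club_closure_points: "club r {a \<in> Field r. \<Union>(N ` A a) \<subseteq> A a}"
  (is "club r ?C")
  unfolding club_def
proof (intro conjI allI impI)
  show "?C \<subseteq> Field r" by blast
  show "\<forall>a\<in>Field r. \<exists>c\<in>?C. lessR r a c"
  proof
    fix a assume "a \<in> Field r"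
    then obtain c where "c \<in> Field r" "lessR r a c" "\<Union>(N ` A c) \<subseteq> A c"
      by (rule closure_points_unbounded)
    thus "\<exists>c\<in>?C. lessR r a c" by blast
  qed
next
  fix a assume "is_limit r a \<and> (\<forall>b. lessR r b a \<longrightarrow> (\<exists>c\<in>?C. lessR r b c \<and> lessR r c a))"
  hence lim: "is_limit r a"
    and below: "\<And>b. lessR r b a \<Longrightarrow> \<exists>c. \<Union>(N ` A c) \<subseteq> A c \<and> lessR r b c \<and> lessR r c a"
    by blast+
  have "\<Union>(N ` A a) \<subseteq> A a" using lim below by (rule closure_points_closed)
  moreover have "a \<in> Field r" using lim unfolding is_limit_def by blast
  ultimately show "a \<in> ?C" by blast
qed

end

end

lemma card_of_doubleton_image: "|(\<lambda>z. {x, z}) ` S| =o |S|"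
proof -
  have "inj_on (\<lambda>z. {x, z}) S" unfolding inj_on_def by (metis doubleton_eq_iff)
  thus ?thesis using inj_on_imp_bij_betw card_of_ordIso ordIso_symmetric by blast
qed

lemma card_of_Diff_ordIso:
  assumes "Cinfinite r" "|X| =o r" "|B| <o r"
  shows "|X - B| =o r"
proof -
  have "\<not> |X - B| <o r"
  proof
    assume "|X - B| <o r"
    hence "|(X - B) \<union> B| <o r"
      using card_of_Un_ordLess_infinite_Field assms(1,3) unfolding cinfinite_def by blast
    hence "|X| <o r" using card_of_mono1[of X "(X - B) \<union> B"] ordLeq_ordLess_trans by blast
    thus False using assms(2) not_ordLess_ordIso by blast
  qed
  moreover have "|X - B| \<le>o r"
    using card_of_mono1[of "X - B" X] assms(2) ordLeq_ordIso_trans by blast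
  ultimately show ?thesis using ordLeq_iff_ordLess_or_ordIso by blast
qed

lemma cardSuc_of_infinite:
  assumes "infinite K"
  shows "Cinfinite (cardSuc (card_of K))" and "regularCard (cardSuc (card_of K))"
    and "|UNIV :: nat set| <o cardSuc |K|"
proof -
  have K: "Cinfinite |K|" using assms by (simp add: cinfinite_def Field_card_of card_of_card_order_on)
  show "Cinfinite (cardSuc (card_of K))" using K by (rule Cinfinite_cardSuc)
  show "regularCard (cardSuc (card_of K))" using K by (simp add: infinite_cardSuc_regularCard cinfinite_def)
  have "|UNIV :: nat set| \<le>o |K|" using assms infinite_iff_card_of_nat by blast
  thus "|UNIV :: nat set| <o cardSuc |K|"
    using cardSuc_greater[OF card_of_Card_order] by (rule ordLeq_ordLess_trans)
qed

lemma is_graph_edgeE: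
  assumes "is_graph V E" "e \<in> E"
  obtains p q where "p \<in> V" "q \<in> V" "p \<noteq> q" "e = {p, q}"
  using assms unfolding is_graph_def by blast

definition neighbours :: "'a set set \<Rightarrow> 'a \<Rightarrow> 'a set" where
  "neighbours F y = {z. {y, z} \<in> F}"

lemma neighbours_subset:
  assumes "is_graph V E" "F \<subseteq> E"
  shows "neighbours F y \<subseteq> V"
proof
  fix z assume "z \<in> neighbours F y"
  hence "{y, z} \<in> E" using assms(2) unfolding neighbours_def by blast
  then obtain p q where "p \<in> V" "q \<in> V" "{y, z} = {p, q}" using is_graph_edgeE[OF assms(1)] by metis
  thus "z \<in> V" by (metis doubleton_eq_iff)
qed

lemma incident_edges_eq_image_neighbours:
  assumes "is_graph V E" "F \<subseteq> E"
  shows "{e \<in> F. y \<in> e} = (\<lambda>z. {y, z}) ` neighbours F y"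
proof
  show "{e \<in> F. y \<in> e} \<subseteq> (\<lambda>z. {y, z}) ` neighbours F y"
  proof
    fix e assume "e \<in> {e \<in> F. y \<in> e}"
    hence e: "e \<in> F" "y \<in> e" by simp_all
    obtain p q where "e = {p, q}" using is_graph_edgeE[OF assms(1)] e(1) assms(2) by blast
    then obtain w where w: "e = {y, w}" using e(2) by blast
    hence "w \<in> neighbours F y" using e(1) unfolding neighbours_def by simp
    with w show "e \<in> (\<lambda>z. {y, z}) ` neighbours F y" by blast
  qed
qed (auto simp: neighbours_def)

lemma card_of_neighbours:
  assumes "is_graph V E" "F \<subseteq> E"
  shows "|neighbours F y| =o |{e \<in> F. y \<in> e}|"
proof -
  have "|(\<lambda>z. {y, z}) ` neighbours F y| =o |neighbours F y|" by (rule card_of_doubleton_image)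
  thus ?thesis unfolding incident_edges_eq_image_neighbours[OF assms] by (rule ordIso_symmetric)
qed

lemma perfect_factor_imp_inC:
  assumes "is_graph V E" "perfect_factor V E f F"
  shows "inC V E f"
  unfolding inC_def
proof (intro conjI ballI)
  fix x assume "x \<in> V"
  hence "|{e \<in> F. x \<in> e}| =o |f x|" using assms(2) unfolding perfect_factor_def by blast
  hence "|f x| =o |{e \<in> F. x \<in> e}|" by (rule ordIso_symmetric)
  moreover have "{e \<in> F. x \<in> e} \<subseteq> {e \<in> E. x \<in> e}"
    using assms(2) unfolding perfect_factor_def by blast
  hence "|{e \<in> F. x \<in> e}| \<le>o |{e \<in> E. x \<in> e}|" by (rule card_of_mono1)
  ultimately show "|f x| \<le>o |{e \<in> E. x \<in> e}|" by (rule ordIso_ordLeq_trans)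
qed (rule assms(1))

lemma is_graph_at:
  assumes G: "is_graph V E" and B: "\<not> V \<subseteq> B"
  shows "is_graph (V_at K V f B) (E_at K V E f B)"
proof -
  have "e \<in> {e. \<exists>x y. x \<in> V_at K V f B \<and> y \<in> V_at K V f B \<and> x \<noteq> y \<and> e = {x, y}}"
    if e: "e \<in> E_at K V E f B" for e
  proof -
    obtain x y where xy: "e \<in> E" "e = {x, y}" "x \<in> V_at K V f B" "y \<in> V - B"
      using e unfolding E_at_def by blast
    obtain p q where "p \<noteq> q" "e = {p, q}" using is_graph_edgeE[OF G xy(1)] by metis
    hence "x \<noteq> y" using xy(2) by auto
    moreover have "y \<in> V_at K V f B" using xy(4) unfolding V_at_def by blast
    ultimately show ?thesis using xy(2,3) by blast
  qed
  moreover have "V_at K V f B \<noteq> {}" using B unfolding V_at_def by blast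
  ultimately show ?thesis unfolding is_graph_def by blast
qed

lemma incident_edges_at_outside:
  assumes G: "is_graph V E" and FE: "F \<subseteq> E" and x: "x \<in> V - B"
    and closed: "\<And>y. y \<in> B \<Longrightarrow> \<not> |f y| =o cardSuc |K| \<Longrightarrow> neighbours F y \<subseteq> B"
  shows "{e \<in> F \<inter> E_at K V E f B. x \<in> e} = {e \<in> F. x \<in> e}"
proof -
  have "e \<in> E_at K V E f B" if e: "e \<in> F" "x \<in> e" for e
  proof -
    obtain z where z: "e = {x, z}" "z \<in> neighbours F x"
      using incident_edges_eq_image_neighbours[OF G FE, of x] e by blast
    have zV: "z \<in> V" using neighbours_subset[OF G FE] z(2) by blast
    have eE: "e \<in> E" using e(1) FE by blast
    consider "z \<notin> B" | "z \<in> B" "|f z| =o cardSuc |K|" | "z \<in> B" "\<not> |f z| =o cardSuc |K|"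
      by blast
    then show ?thesis
    proof cases
      case 1
      then show ?thesis using eE z(1) x zV unfolding E_at_def V_at_def by blast
    next
      case 2
      have "e = {z, x}" using z(1) by (simp add: insert_commute)
      then show ?thesis using eE x zV 2 unfolding E_at_def V_at_def by blast
    next
      case 3
      have "x \<in> neighbours F z" using e(1) z(1) unfolding neighbours_def by (simp add: insert_commute)
      hence "x \<in> B" using closed 3 by blast
      with x show ?thesis by blast
    qed
  qed
  thus ?thesis by blast
qed

lemma incident_edges_at_inside:
  assumes G: "is_graph V E" and FE: "F \<subseteq> E" and x: "x \<in> B" "x \<in> V_at K V f B"
  shows "{e \<in> F \<inter> E_at K V E f B. x \<in> e} = (\<lambda>z. {x, z}) ` (neighbours F x - B)"
proof
  show "{e \<in> F \<inter> E_at K V E f B. x \<in> e} \<subseteq> (\<lambda>z. {x, z}) ` (neighbours F x - B)"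
  proof
    fix e assume "e \<in> {e \<in> F \<inter> E_at K V E f B. x \<in> e}"
    then obtain p q where e: "e \<in> F" "x \<in> e" "e = {p, q}" "q \<in> V - B"
      unfolding E_at_def by blast
    have "e = {x, q}" using e(2,3,4) x(1) by blast
    moreover have "q \<in> neighbours F x" using e(1) calculation unfolding neighbours_def by simp
    ultimately show "e \<in> (\<lambda>z. {x, z}) ` (neighbours F x - B)" using e(4) by blast
  qed
  show "(\<lambda>z. {x, z}) ` (neighbours F x - B) \<subseteq> {e \<in> F \<inter> E_at K V E f B. x \<in> e}"
  proof
    fix e assume "e \<in> (\<lambda>z. {x, z}) ` (neighbours F x - B)"
    then obtain z where z: "e = {x, z}" "z \<in> neighbours F x" "z \<notin> B" by blast
    have "e \<in> F" using z(1,2) unfolding neighbours_def by simp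
    moreover have "z \<in> V" using neighbours_subset[OF G FE] z(2) by blast
    ultimately show "e \<in> {e \<in> F \<inter> E_at K V E f B. x \<in> e}"
      using FE x(2) z(1,3) unfolding E_at_def by blast
  qed
qed

lemma card_of_neighbours_ordLess:
  assumes G: "is_graph V E" and F: "perfect_factor V E f F" and y: "y \<in> V"
    and V: "|V| =o r" and fy: "\<not> |f y| =o r"
  shows "|neighbours F y| <o r"
proof -
  have FE: "F \<subseteq> E" using F unfolding perfect_factor_def by blast
  have "|neighbours F y| \<le>o r"
    using ordLeq_ordIso_trans[OF card_of_mono1[OF neighbours_subset[OF G FE]] V] .
  moreover have "|neighbours F y| =o |f y|"
    using ordIso_transitive[OF card_of_neighbours[OF G FE]] F y unfolding perfect_factor_def by blast
  hence "\<not> |neighbours F y| =o r" using fy ordIso_symmetric ordIso_transitive by blast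
  ultimately show ?thesis using ordLeq_iff_ordLess_or_ordIso by blast
qed

lemma perfect_factor_at:
  assumes G: "is_graph V E" and F: "perfect_factor V E f F" and K: "infinite K"
    and B: "|B| <o cardSuc |K|"
    and closed: "\<And>y. y \<in> B \<Longrightarrow> \<not> |f y| =o cardSuc |K| \<Longrightarrow> neighbours F y \<subseteq> B"
  shows "perfect_factor (V_at K V f B) (E_at K V E f B) (f_at K V f B) (F \<inter> E_at K V E f B)"
  unfolding perfect_factor_def
proof (intro conjI ballI)
  have FE: "F \<subseteq> E" and deg: "\<And>x. x \<in> V \<Longrightarrow> |{e \<in> F. x \<in> e}| =o |f x|"
    using F unfolding perfect_factor_def by blast+
  fix x assume x: "x \<in> V_at K V f B"
  have xV: "x \<in> V" using x unfolding V_at_def by blast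
  have "|{e \<in> F \<inter> E_at K V E f B. x \<in> e}| =o |f x|"
  proof (cases "x \<in> B")
    case False
    hence "{e \<in> F \<inter> E_at K V E f B. x \<in> e} = {e \<in> F. x \<in> e}"
      using incident_edges_at_outside[OF G FE _ closed] xV by blast
    thus ?thesis using deg[OF xV] by simp
  next
    case True
    have fx: "|f x| =o cardSuc |K|" using x True unfolding V_at_def by blast
    have "|neighbours F x| =o cardSuc |K|"
      using ordIso_transitive[OF ordIso_transitive[OF card_of_neighbours[OF G FE] deg[OF xV]] fx] .
    hence nbB: "|neighbours F x - B| =o cardSuc |K|"
      using card_of_Diff_ordIso[OF cardSuc_of_infinite(1)[OF K] _ B] by blast
    have "|(\<lambda>z. {x, z}) ` (neighbours F x - B)| =o |f x|"
      using ordIso_transitive[OF card_of_doubleton_image ordIso_transitive[OF nbB ordIso_symmetric[OF fx]]] .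
    thus ?thesis unfolding incident_edges_at_inside[OF G FE True x] .
  qed
  thus "|{e \<in> F \<inter> E_at K V E f B. x \<in> e}| =o |f_at K V f B x|"
    using x unfolding f_at_def by simp
qed blast

lemma filtration_destr_seq:
  assumes K: "infinite K" and A: "destr_seq K V A"
  shows "filtration (cardSuc (card_of K)) A V"
proof
  let ?R = "cardSuc (card_of K)"
  show "relChain ?R A" "\<And>a. a \<in> Field ?R \<Longrightarrow> |A a| <o ?R"
    using A unfolding destr_seq_def relChain_def by simp_all
  show "V = (\<Union>a\<in>Field ?R. A a)"
    using A unfolding destr_seq_def by (simp add: Setcompr_eq_image)
  show "\<And>c. is_limit ?R c \<Longrightarrow> A c = \<Union>{A b |b. lessR ?R b c}"
    using A unfolding destr_seq_def by simp
qed (use cardSuc_of_infinite[OF K] in auto)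

lemma club_closed_stages:
  assumes G: "is_graph V E" and F: "perfect_factor V E f F" and K: "infinite K"
    and size: "|V| =o cardSuc |K|" and A: "destr_seq K V A"
  shows "club (cardSuc (card_of K)) {a \<in> Field (cardSuc (card_of K)).
    \<forall>y\<in>A a. \<not> |f y| =o cardSuc |K| \<longrightarrow> neighbours F y \<subseteq> A a}"
proof -
  let ?R = "cardSuc (card_of K)"
  interpret filtration ?R A V using filtration_destr_seq[OF K A] .
  define N where "N y = (if |f y| =o ?R then {} else neighbours F y)" for y
  have "club ?R {a \<in> Field ?R. \<Union>(N ` A a) \<subseteq> A a}"
  proof (rule club_closure_points)
    show "\<And>y. y \<in> V \<Longrightarrow> N y \<subseteq> V"
      using neighbours_subset[OF G] F unfolding N_def perfect_factor_def by auto
    show "\<And>y. y \<in> V \<Longrightarrow> |N y| <o ?R"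
      using card_of_neighbours_ordLess[OF G F _ size] Cinfinite_gt_empty[OF Cinfinite]
      unfolding N_def by auto
  qed
  moreover have "(\<Union>(N ` A a) \<subseteq> A a) \<longleftrightarrow> (\<forall>y\<in>A a. \<not> |f y| =o ?R \<longrightarrow> neighbours F y \<subseteq> A a)" for a
    unfolding N_def by auto
  ultimately show ?thesis by simp
qed

theorem lemma4:
  fixes P :: "'a set \<Rightarrow> 'a set set \<Rightarrow> ('a \<Rightarrow> 'b set) \<Rightarrow> bool"
    and K :: "'k set" and V :: "'a set" and E :: "'a set set" and f :: "'a \<Rightarrow> 'b set"
  assumes necessary: "\<forall>V' E' f'. inC V' E' f' \<and> (\<exists>F. perfect_factor V' E' f' F) \<longrightarrow> fulfills P V' E' f'"
    and kappa: "infinite K"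
    and C: "inC V E f"
    and size: "(card_of V, cardSuc (card_of K)) \<in> ordIso"
    and perfect: "\<exists>F. perfect_factor V E f F"
  shows "\<not> P_destructed P K V E f"
proof
  let ?R = "cardSuc (card_of K)"
  assume "P_destructed P K V E f"
  then obtain A where A: "destr_seq K V A" and S: "stationary ?R
      {a \<in> Field ?R. \<not> fulfills P (V_at K V f (A a)) (E_at K V E f (A a)) (f_at K V f (A a))}"
    unfolding P_destructed_def is_P_destruction_def by blast
  obtain F where F: "perfect_factor V E f F" using perfect by blast
  have G: "is_graph V E" using C unfolding inC_def by blast
  obtain a where a: "a \<in> Field ?R" "\<forall>y\<in>A a. \<not> |f y| =o ?R \<longrightarrow> neighbours F y \<subseteq> A a"
    "\<not> fulfills P (V_at K V f (A a)) (E_at K V E f (A a)) (f_at K V f (A a))"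
    using S club_closed_stages[OF G F kappa size A] unfolding stationary_def by blast
  have A_small: "|A a| <o ?R" using A a(1) unfolding destr_seq_def by simp
  have "\<not> V \<subseteq> A a"
    using A_small size card_of_mono1 ordLeq_ordLess_trans not_ordLess_ordIso by metis
  moreover have "perfect_factor (V_at K V f (A a)) (E_at K V E f (A a)) (f_at K V f (A a))
      (F \<inter> E_at K V E f (A a))"
    using perfect_factor_at[OF G F kappa A_small] a(2) by blast
  ultimately show False
    using necessary a(3) perfect_factor_imp_inC[OF is_graph_at[OF G]] by blast
qed

end
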